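(* Let $A$ be a Banach lattice algebra with identity $e$. The set $OI(A)$ is a Boolean algebra, with minimum $0$, maximum $e$ and operations \[\overline p=e-p,\qquad p\vee q=p+q-pq,\qquad p\wedge q=pq\qquad(p,q\in OI(A)),\] and these suprema and infima coincide with the suprema and infima of $p,q$ computed in the lattice $A$.
   Context: A Banach lattice algebra is a real Banach lattice $A$ with an associative bilinear product making it a Banach algebra such that $xy\ge0$ whenever $x,y\ge0$; identity $e$ means a multiplicative identity with $\|e\|=1$. $OI(A)=\{p\in A: p^2=p,\ 0\le p\le e\}$. *)

theory Defs
  imports "HOL-Analysis.Analysis"
begin

definition lmod :: "'a::{lattice, uminus} \<Rightarrow> 'a" where
  "lmod x = sup x (- x)"

text \<open>The type class
  real_normed_algebra_1 + banach provides: a real Banach space with an associative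
  bilinear product, submultiplicative norm (Banach algebra) and a multiplicative
  identity 1 with norm 1 = 1.  The predicate below adds: the order is a lattice order
  compatible with the vector space structure (Riesz space), the norm is a lattice
  norm (Banach lattice), and products of positive elements are positive.\<close>
definition banach_lattice_algebra :: "'a::{real_normed_algebra_1, banach, lattice} itself \<Rightarrow> bool" where
  "banach_lattice_algebra _ \<longleftrightarrow>
     (\<forall>x y z :: 'a. x \<le> y \<longrightarrow> x + z \<le> y + z) \<and>
     (\<forall>(x :: 'a) y (c :: real). x \<le> y \<longrightarrow> 0 \<le> c \<longrightarrow> c *\<^sub>R x \<le> c *\<^sub>R y) \<and>
     (\<forall>x y :: 'a. lmod x \<le> lmod y \<longrightarrow> norm x \<le> norm y) \<and>
     (\<forall>x y :: 'a. 0 \<le> x \<longrightarrow> 0 \<le> y \<longrightarrow> 0 \<le> x * y)"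

definition OI :: "'a::{real_normed_algebra_1, lattice} set" where
  "OI = {p. p * p = p \<and> 0 \<le> p \<and> p \<le> 1}"

text \<open>A Boolean algebra on a carrier set S: the axioms of Isabelle's locale
  boolean_algebra (Boolean_Algebras.thy), relativised to S, plus closure of S
  under the operations.\<close>
definition boolean_algebra_on ::
  "'a set \<Rightarrow> ('a \<Rightarrow> 'a \<Rightarrow> 'a) \<Rightarrow> ('a \<Rightarrow> 'a \<Rightarrow> 'a) \<Rightarrow> ('a \<Rightarrow> 'a) \<Rightarrow> 'a \<Rightarrow> 'a \<Rightarrow> bool" where
  "boolean_algebra_on S cj dj cp zero one \<longleftrightarrow>
     zero \<in> S \<and> one \<in> S \<and>
     (\<forall>x\<in>S. cp x \<in> S) \<and>
     (\<forall>x\<in>S. \<forall>y\<in>S. cj x y \<in> S \<and> dj x y \<in> S) \<and>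
     (\<forall>x\<in>S. \<forall>y\<in>S. \<forall>z\<in>S. cj (cj x y) z = cj x (cj y z)) \<and>
     (\<forall>x\<in>S. \<forall>y\<in>S. cj x y = cj y x) \<and>
     (\<forall>x\<in>S. \<forall>y\<in>S. \<forall>z\<in>S. dj (dj x y) z = dj x (dj y z)) \<and>
     (\<forall>x\<in>S. \<forall>y\<in>S. dj x y = dj y x) \<and>
     (\<forall>x\<in>S. \<forall>y\<in>S. \<forall>z\<in>S. cj x (dj y z) = dj (cj x y) (cj x z)) \<and>
     (\<forall>x\<in>S. \<forall>y\<in>S. \<forall>z\<in>S. dj x (cj y z) = cj (dj x y) (dj x z)) \<and>
     (\<forall>x\<in>S. cj x one = x) \<and>
     (\<forall>x\<in>S. dj x zero = x) \<and>
     (\<forall>x\<in>S. cj x (cp x) = zero) \<and>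
     (\<forall>x\<in>S. dj x (cp x) = one)"

end

theory Submission
  imports Defs
begin

text \<open>The order-idempotents commute because their product is their infimum: since
  \<open>p(e - p) = 0\<close>, every \<open>0 \<le> x \<le> p\<close> satisfies \<open>xp = x\<close>, so
  \<open>inf p q \<le> pq \<le> inf p q\<close>.  Commuting idempotents form a Boolean ring, which gives the
  Boolean algebra, and \<open>p + q - pq = p + q - inf p q = sup p q\<close> holds in any lattice-ordered
  group.  The only place where the norm enters is positivity of the identity: writing
  \<open>e\<^sup>+ = e + b\<close> with \<open>b \<ge> 0\<close>, Bernoulli's inequality gives \<open>n b \<le> (e\<^sup>+)\<^sup>n\<^sup>+\<^sup>1\<close>, while
  \<open>\<parallel>e\<^sup>+\<parallel> \<le> \<parallel>e\<parallel> = 1\<close> for a lattice norm; hence \<open>n \<parallel>b\<parallel> \<le> 1\<close> for all \<open>n\<close> and \<open>b = 0\<close>.\<close>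

lemma idempotent_commute_mult_join:
  fixes x y z :: "'a::ring_1"
  assumes "x * x = x" "x * y = y * x"
  shows "x * (y + z - y * z) = x * y + x * z - x * y * (x * z)"
proof -
  have "x * y * (x * z) = x * y * z"
    by (metis assms mult.assoc)
  then show ?thesis
    by (simp add: algebra_simps)
qed

lemma idempotent_commute_join_mult:
  fixes x y z :: "'a::ring_1"
  assumes xx: "x * x = x" and xy: "x * y = y * x"
  shows "x + y * z - x * (y * z) = (x + y - x * y) * (x + z - x * z)"
proof -
  have xxz: "x * (x * z) = x * z"
    by (metis xx mult.assoc)
  have xyx: "x * y * x = x * y" and xyxz: "x * y * (x * z) = x * y * z"
    and yxz: "y * (x * z) = x * (y * z)"
    by (metis xx xy mult.assoc)+
  have "(x + y - x * y) * (x + z - x * z)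
      = x * x + x * z - x * (x * z) + (y * x + y * z - y * x * z)
        - (x * y * x + x * y * z - x * y * (x * z))"
    by (simp add: algebra_simps)
  then show ?thesis
    using xx xxz xy xyx xyxz yxz by (simp add: algebra_simps)
qed

lemma bounded_multiples_eq_zero:
  fixes b :: "'a::real_normed_vector"
  assumes "\<And>n::nat. real n * norm b \<le> C"
  shows "b = 0"
proof (rule ccontr)
  assume "b \<noteq> 0"
  then have "norm b > 0" by simp
  obtain n :: nat where "real n > C / norm b"
    using reals_Archimedean2 by blast
  with \<open>norm b > 0\<close> have "real n * norm b > C"
    by (simp add: field_simps)
  with assms[of n] show False by simp
qed

locale lattice_ordered_algebra =
  fixes A :: "'a::{real_normed_algebra_1, lattice} itself"
  assumes add_le_add_right_lat: "\<And>x y z :: 'a. x \<le> y \<Longrightarrow> x + z \<le> y + z"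
    and mult_nonneg_lat: "\<And>x y :: 'a. 0 \<le> x \<Longrightarrow> 0 \<le> y \<Longrightarrow> 0 \<le> x * y"
begin

lemma le_add_iff_right: "(x::'a) \<le> y \<longleftrightarrow> x + z \<le> y + z"
  using add_le_add_right_lat[of x y z] add_le_add_right_lat[of "x + z" "y + z" "- z"] by auto

lemma le_iff_diff_nonneg: "(x::'a) \<le> y \<longleftrightarrow> 0 \<le> y - x"
  using le_add_iff_right[of x y "- x"] by simp

lemma mult_right_mono_lat: "0 \<le> (z::'a) \<Longrightarrow> x \<le> y \<Longrightarrow> x * z \<le> y * z"
  using le_iff_diff_nonneg[of x y] le_iff_diff_nonneg[of "x * z" "y * z"] mult_nonneg_lat[of "y - x" z]
  by (simp add: left_diff_distrib)

lemma mult_left_mono_lat: "0 \<le> (z::'a) \<Longrightarrow> x \<le> y \<Longrightarrow> z * x \<le> z * y"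
  using le_iff_diff_nonneg[of x y] le_iff_diff_nonneg[of "z * x" "z * y"] mult_nonneg_lat[of z "y - x"]
  by (simp add: right_diff_distrib)

lemma le_add_nonneg: "(x::'a) \<le> y \<Longrightarrow> 0 \<le> z \<Longrightarrow> x \<le> y + z"
  using add_le_add_right_lat[of 0 z y] by (simp add: add.commute)

lemma nonneg_add: "0 \<le> (x::'a) \<Longrightarrow> 0 \<le> y \<Longrightarrow> 0 \<le> x + y"
  using le_add_nonneg[of 0 x y] by simp

lemma sup_eq_add_diff_inf: "sup (p::'a) q = p + q - inf p q"
proof (rule antisym)
  have "p \<le> p + q - inf p q" "q \<le> p + q - inf p q"
    using le_add_iff_right[of "inf p q" q "p - inf p q"] le_add_iff_right[of "inf p q" p "q - inf p q"]
    by (simp_all add: algebra_simps)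
  then show "sup p q \<le> p + q - inf p q" by simp
next
  have "p + q - sup p q \<le> p" "p + q - sup p q \<le> q"
    using le_add_iff_right[of q "sup p q" "p - sup p q"] le_add_iff_right[of p "sup p q" "q - sup p q"]
    by (simp_all add: algebra_simps)
  then have "p + q - sup p q \<le> inf p q" by simp
  then show "p + q - inf p q \<le> sup p q"
    using le_add_iff_right[of "p + q - sup p q" "inf p q" "sup p q - inf p q"] by (simp add: algebra_simps)
qed

lemma OI_D:
  assumes "p \<in> OI"
  shows "p * p = p" "0 \<le> p" "p \<le> (1::'a)"
  using assms by (simp_all add: OI_def)

lemma OI_mult_absorb:
  assumes p: "p \<in> OI" and x: "0 \<le> x" "x \<le> (p::'a)"
  shows "x * p = x"
proof -
  have c: "0 \<le> 1 - p"
    using OI_D(3)[OF p] le_iff_diff_nonneg by blast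
  have "0 \<le> x * (1 - p)" "x * (1 - p) \<le> p * (1 - p)"
    using mult_nonneg_lat[OF x(1) c] mult_right_mono_lat[OF c x(2)] .
  moreover have "p * (1 - p) = 0"
    using OI_D(1)[OF p] by (simp add: algebra_simps)
  ultimately show ?thesis
    by (simp add: algebra_simps)
qed

lemma OI_mult_eq_inf:
  assumes p: "p \<in> OI" and q: "q \<in> OI"
  shows "p * q = inf p (q::'a)"
proof (rule antisym)
  have "p * q \<le> 1 * q" "p * q \<le> p * 1"
    using mult_right_mono_lat[OF OI_D(2)[OF q] OI_D(3)[OF p]]
      mult_left_mono_lat[OF OI_D(2)[OF p] OI_D(3)[OF q]] .
  then show "p * q \<le> inf p q" by simp
next
  have "0 \<le> inf p q"
    using OI_D(2)[OF p] OI_D(2)[OF q] by simp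
  then have "inf p q = inf p q * q"
    using OI_mult_absorb[OF q] by simp
  also have "\<dots> \<le> p * q"
    using mult_right_mono_lat[OF OI_D(2)[OF q]] by simp
  finally show "inf p q \<le> p * q" .
qed

lemma OI_mult_commute: "p \<in> OI \<Longrightarrow> q \<in> OI \<Longrightarrow> p * q = q * (p::'a)"
  using OI_mult_eq_inf by (metis inf_commute)

lemma OI_compl: "p \<in> OI \<Longrightarrow> 1 - p \<in> (OI::'a set)"
  using le_iff_diff_nonneg[of p 1] le_add_iff_right[of "1 - p" 1 p] le_add_iff_right[of 0 p 1]
  by (auto simp: OI_def algebra_simps add.commute)

lemma OI_mult: assumes "p \<in> OI" "q \<in> OI" shows "p * q \<in> (OI::'a set)"
proof -
  have "p * q * (p * q) = (p * p) * (q * q)"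
    using OI_mult_commute[OF assms] by (metis mult.assoc)
  then have "p * q * (p * q) = p * q"
    using OI_D(1)[OF assms(1)] OI_D(1)[OF assms(2)] by simp
  moreover have "0 \<le> p * q"
    using mult_nonneg_lat OI_D(2)[OF assms(1)] OI_D(2)[OF assms(2)] by blast
  moreover have "p * q \<le> 1"
    using OI_mult_eq_inf[OF assms] OI_D(3)[OF assms(1)] by (simp add: le_infI1)
  ultimately show ?thesis by (simp add: OI_def)
qed

lemma OI_join: "p \<in> OI \<Longrightarrow> q \<in> OI \<Longrightarrow> p + q - p * q \<in> (OI::'a set)"
  using OI_compl[of "(1 - p) * (1 - q)"] OI_mult[of "1 - p" "1 - q"] OI_compl[of p] OI_compl[of q]
  by (simp add: algebra_simps)

lemma OI_join_eq_sup: "p \<in> OI \<Longrightarrow> q \<in> OI \<Longrightarrow> p + q - p * q = sup p (q::'a)"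
  by (simp add: OI_mult_eq_inf sup_eq_add_diff_inf)

lemma boolean_algebra_on_OI:
  assumes "0 \<le> (1::'a)"
  shows "boolean_algebra_on (OI :: 'a set) (\<lambda>p q. p * q) (\<lambda>p q. p + q - p * q) (\<lambda>p. 1 - p) 0 1"
  unfolding boolean_algebra_on_def
proof (intro conjI ballI)
  show "(0::'a) \<in> OI" "(1::'a) \<in> OI"
    using assms by (simp_all add: OI_def)
next
  fix x y z :: 'a assume x: "x \<in> OI" and y: "y \<in> OI" and z: "z \<in> OI"
  show "x * y * z = x * (y * z)"
    by (simp add: mult.assoc)
  show "x * y = y * x" "x + y - x * y = y + x - y * x"
    using OI_mult_commute[OF x y] by (simp_all add: add.commute)
  show "x + y - x * y + z - (x + y - x * y) * z = x + (y + z - y * z) - x * (y + z - y * z)"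
    by (simp add: algebra_simps)
  show "x * (y + z - y * z) = x * y + x * z - x * y * (x * z)"
    "x + y * z - x * (y * z) = (x + y - x * y) * (x + z - x * z)"
    using OI_D(1)[OF x] OI_mult_commute[OF x y]
    by (simp_all add: idempotent_commute_mult_join idempotent_commute_join_mult)
  show "x * y \<in> OI" "x + y - x * y \<in> OI"
    using OI_mult[OF x y] OI_join[OF x y] .
  show "1 - x \<in> OI" "x * 1 = x" "x + 0 - x * 0 = x"
    using OI_compl[OF x] by simp_all
  show "x * (1 - x) = 0" "x + (1 - x) - x * (1 - x) = 1"
    using OI_D(1)[OF x] by (simp_all add: algebra_simps)
qed

lemma bernoulli_ineq:
  assumes "0 \<le> b" "0 \<le> 1 + (b::'a)"
  shows "1 + of_nat n * b \<le> (1 + b) ^ n"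
proof (induction n)
  case 0
  show ?case by simp
next
  case (Suc n)
  have "0 \<le> of_nat n * (b * b)"
  proof (induction n)
    case (Suc n)
    then show ?case
      using nonneg_add[OF mult_nonneg_lat[OF assms(1) assms(1)] Suc] by (simp add: algebra_simps)
  qed simp
  moreover have "(1 + of_nat n * b) * (1 + b) = 1 + of_nat (Suc n) * b + of_nat n * (b * b)"
    by (simp add: algebra_simps)
  ultimately have "1 + of_nat (Suc n) * b \<le> (1 + of_nat n * b) * (1 + b)"
    using le_add_nonneg[OF order_refl] by metis
  also have "\<dots> \<le> (1 + b) ^ n * (1 + b)"
    using mult_right_mono_lat[OF assms(2) Suc.IH] .
  finally show ?case
    by (simp add: power_commutes)
qed

end

locale normed_lattice_algebra = lattice_ordered_algebra A
  for A :: "'a::{real_normed_algebra_1, lattice} itself" +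
  assumes scaleR_left_mono_lat: "\<And>(x :: 'a) y (c :: real). x \<le> y \<Longrightarrow> 0 \<le> c \<Longrightarrow> c *\<^sub>R x \<le> c *\<^sub>R y"
    and norm_lmod_mono: "\<And>x y :: 'a. lmod x \<le> lmod y \<Longrightarrow> norm x \<le> norm y"
begin

lemma lmod_nonneg: "0 \<le> lmod (x::'a)"
proof -
  have "x + - x \<le> lmod x + - x" "- x + lmod x \<le> lmod x + lmod x"
    using add_le_add_right_lat[of x "lmod x" "- x"] add_le_add_right_lat[of "- x" "lmod x" "lmod x"]
    by (simp_all add: lmod_def)
  then have "0 \<le> lmod x + lmod x"
    by (simp add: add.commute)
  from scaleR_left_mono_lat[OF this, of "1/2"] show ?thesis
    by (simp flip: scaleR_2)
qed

lemma lmod_eq_self: "0 \<le> (x::'a) \<Longrightarrow> lmod x = x"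
  using le_add_iff_right[of "- x" 0 x] unfolding lmod_def
  by (simp add: sup_absorb1 order_trans)

lemma norm_mono_nonneg: "0 \<le> (x::'a) \<Longrightarrow> x \<le> y \<Longrightarrow> norm x \<le> norm y"
  using norm_lmod_mono[of x y] lmod_eq_self[of x] lmod_eq_self[of y] by simp

lemma one_nonneg: "0 \<le> (1::'a)"
proof -
  define b :: 'a where "b = sup 1 0 - 1"
  have b0: "0 \<le> b" and a0: "0 \<le> 1 + b" and a_eq: "1 + b = sup 1 0"
    using le_iff_diff_nonneg[of 1 "sup 1 0"] by (simp_all add: b_def)
  have "lmod (1 + b) \<le> lmod (1::'a)"
    using lmod_nonneg[of 1] lmod_eq_self[OF a0] by (simp add: a_eq lmod_def le_supI1)
  then have norm_a: "norm (1 + b) \<le> 1"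
    using norm_lmod_mono by fastforce
  have "real n * norm b \<le> 1" for n
  proof -
    have nb0: "0 \<le> of_nat n * b"
      using scaleR_left_mono_lat[OF b0, of "real n"] by (simp add: scaleR_conv_of_real)
    have "of_nat n * b \<le> (1 + b) + of_nat n * b"
      using le_add_nonneg[OF order_refl a0, of "of_nat n * b"] by (simp add: add.commute)
    also have "\<dots> = 1 + of_nat (Suc n) * b"
      by (simp add: algebra_simps)
    also have "\<dots> \<le> (1 + b) ^ Suc n"
      by (rule bernoulli_ineq[OF b0 a0])
    finally have "of_nat n * b \<le> (1 + b) ^ Suc n" .
    then have "norm (of_nat n * b) \<le> norm ((1 + b) ^ Suc n)"
      by (rule norm_mono_nonneg[OF nb0])
    also have "\<dots> \<le> norm (1 + b) ^ Suc n"
      by (rule norm_power_ineq)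
    also have "\<dots> \<le> 1"
      using norm_a by (intro power_le_one) auto
    moreover have "norm (of_nat n * b) = real n * norm b"
      by (metis norm_scaleR abs_of_nat scaleR_conv_of_real of_real_of_nat_eq)
    ultimately show ?thesis
      by simp
  qed
  then have "b = 0"
    by (rule bounded_multiples_eq_zero)
  then show ?thesis
    using a0 by simp
qed

end

theorem mainTheorem6:
  fixes A :: "'a::{real_normed_algebra_1, banach, lattice} itself"
  assumes "banach_lattice_algebra A"
  shows "boolean_algebra_on (OI :: 'a set) (\<lambda>p q. p * q) (\<lambda>p q. p + q - p * q) (\<lambda>p. 1 - p) 0 1
    \<and> (\<forall>p\<in>(OI :: 'a set). 0 \<le> p \<and> p \<le> 1)
    \<and> (\<forall>p\<in>(OI :: 'a set). \<forall>q\<in>OI. p + q - p * q = sup p q \<and> p * q = inf p q)"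
proof -
  interpret normed_lattice_algebra A
    using assms unfolding banach_lattice_algebra_def by unfold_locales blast+
  show ?thesis
    using boolean_algebra_on_OI[OF one_nonneg] OI_D(2,3) OI_join_eq_sup OI_mult_eq_inf
    by (intro conjI ballI) auto
qed

end
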